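(* Assume the PACE setting below. Then \[ \mathbb{E}\,\tilde{\delta}(\hat C, C) \le \frac{T}{\tau n^2}\,\mathbb{E}\|\hat C^{(S)} - C^{(S)}\|_F^2 + \pi_{\max}\,\max_{i,j}\mathbb{P}(N_{ij}<\tau), \] and moreover \[ \mathbb{E}\|\hat C^{(S)} - C^{(S)}\|_F^2 \le n^2\,\mathbb{P}(|S|<m_\star) + 4\,\mathbb{E}\big[|S|^2\,\delta(\hat Z_S, Z_S)\,\mathbf 1\{|S|\ge m_\star\}\big]. \]
   Context: PACE setting. Nodes are $[n]=\{1,\dots,n\}$; $Z\in\{0,1\}^{n\times K}$ is a fixed (true) cluster membership matrix (each row has exactly one $1$), $C=ZZ^\top$, $n_k$ is the number of nodes in cluster $k$, $\pi_k=n_k/n$, $\pi_{\max}=\max_k\pi_k$. Fix integers $m_\star\ge1$, $T\ge1$ and a real $\tau>0$. Random node subsets $S_1,\dots,S_T\subseteq[n]$ are chosen (jointly with a random network) by some sampling scheme. For a subset $S$, $C^{(S)}$ denotes the $n\times n$ matrix with $C^{(S)}_{ij}=C_{ij}$ if $i,j\in S$ and $0$ otherwise. For each $\ell$, $\hat C^{(\ell)}$ is a random $n\times n$ matrix vanishing outside $S_\ell\times S_\ell$: if $|S_\ell|\ge m_\star$ then $\hat C^{(\ell)}$ is the zero-extension of $\hat Z_{S_\ell}\hat Z_{S_\ell}^\top$, where $\hat Z_{S_\ell}\in\{0,1\}^{|S_\ell|\times K}$ is a cluster membership matrix output by some clustering algorithm on the subgraph induced by $S_\ell$; if $|S_\ell|<m_\star$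 then $\hat C^{(\ell)}=0$. It is assumed that the pairs $(S_\ell,\hat C^{(\ell)})$, $\ell=1,\dots,T$, are identically distributed, each with the distribution of a generic pair $(S,\hat C^{(S)})$ (with corresponding $\hat Z_S$). Let $y^{(\ell)}_{ij}=\mathbf 1\{i\in S_\ell, j\in S_\ell\}$, $N_{ij}=\sum_{\ell=1}^T y^{(\ell)}_{ij}$, and define the PACE estimator $\hat C_{ij} = \mathbf 1\{N_{ij}\ge\tau\}\,\frac{\sum_{\ell=1}^T y^{(\ell)}_{ij}\hat C^{(\ell)}_{ij}}{N_{ij}}$ (taken to be $0$ when $N_{ij}<\tau$). $Z_S\in\{0,1\}^{|S|\times K}$ is the submatrix of $Z$ with rows in $S$; $\delta(\hat Z_S,Z_S)=\min_Q \frac{1}{|S|}\|\hat Z_SQ-Z_S\|_0$ over $K\times K$ permutation matrices $Q$ ($\|\cdot\|_0$ counts nonzero entries); $\tilde\delta(\hat C,C)=\frac1{n^2}\|\hat C-C\|_F^2$. Expectations are over all randomness (network and sampling). *)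

theory Defs
  imports "HOL-Probability.Probability"
begin

text \<open>Nodes are {1..n}; clusters are labelled 0..K-1. A cluster membership matrix
  Z in {0,1}^(n x K) with exactly one 1 per row is represented by its label function
  z (row i has its 1 in column z i).\<close>

definition memb :: "(nat \<Rightarrow> nat) \<Rightarrow> nat \<Rightarrow> nat \<Rightarrow> real" where
  "memb z i k = (if z i = k then 1 else 0)"

text \<open>C = Z Z^T.\<close>
definition cmat :: "(nat \<Rightarrow> nat) \<Rightarrow> nat \<Rightarrow> nat \<Rightarrow> real" where
  "cmat z i j = (if z i = z j then 1 else 0)"

definition cmat_S :: "(nat \<Rightarrow> nat) \<Rightarrow> nat set \<Rightarrow> nat \<Rightarrow> nat \<Rightarrow> real" where
  "cmat_S z S i j = (if i \<in> S \<and> j \<in> S then cmat z i j else 0)"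

text \<open>hat C^(S): zero-extension of hat Z_S hat Z_S^T if |S| >= m_star, zero otherwise;
  zh is the label function of the clustering output on S.\<close>
definition chat_S :: "nat \<Rightarrow> nat set \<Rightarrow> (nat \<Rightarrow> nat) \<Rightarrow> nat \<Rightarrow> nat \<Rightarrow> real" where
  "chat_S mstar S zh i j =
     (if card S \<ge> mstar \<and> i \<in> S \<and> j \<in> S then cmat zh i j else 0)"

definition frob2 :: "nat \<Rightarrow> (nat \<Rightarrow> nat \<Rightarrow> real) \<Rightarrow> (nat \<Rightarrow> nat \<Rightarrow> real) \<Rightarrow> real" where
  "frob2 n A B = (\<Sum>i\<in>{1..n}. \<Sum>j\<in>{1..n}. (A i j - B i j)^2)"

definition delta_tilde :: "nat \<Rightarrow> (nat \<Rightarrow> nat \<Rightarrow> real) \<Rightarrow> (nat \<Rightarrow> nat \<Rightarrow> real) \<Rightarrow> real" where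
  "delta_tilde n A B = frob2 n A B / (real n)^2"

definition pmat :: "(nat \<Rightarrow> nat) \<Rightarrow> nat \<Rightarrow> nat \<Rightarrow> real" where
  "pmat \<sigma> l k = (if \<sigma> l = k then 1 else 0)"

definition delta_mis :: "nat \<Rightarrow> nat set \<Rightarrow> (nat \<Rightarrow> nat) \<Rightarrow> (nat \<Rightarrow> nat) \<Rightarrow> real" where
  "delta_mis K S zh z = Min ((\<lambda>\<sigma>. (1 / real (card S)) *
       real (card {(i, k). i \<in> S \<and> k < K \<and>
          (\<Sum>l<K. memb zh i l * pmat \<sigma> l k) \<noteq> memb z i k}))
     ` {\<sigma>. \<sigma> permutes {..<K}})"

definition Ncount :: "nat \<Rightarrow> (nat \<Rightarrow> nat set) \<Rightarrow> nat \<Rightarrow> nat \<Rightarrow> nat" where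
  "Ncount T S i j = card {l \<in> {1..T}. i \<in> S l \<and> j \<in> S l}"

definition pace :: "nat \<Rightarrow> real \<Rightarrow> (nat \<Rightarrow> nat set) \<Rightarrow> (nat \<Rightarrow> nat \<Rightarrow> nat \<Rightarrow> real)
    \<Rightarrow> nat \<Rightarrow> nat \<Rightarrow> real" where
  "pace T \<tau> S Ch i j =
     (if real (Ncount T S i j) \<ge> \<tau> then
        (\<Sum>l\<in>{1..T}. (if i \<in> S l \<and> j \<in> S l then 1 else 0) * Ch l i j)
          / real (Ncount T S i j)
      else 0)"

definition pi_max :: "nat \<Rightarrow> nat \<Rightarrow> (nat \<Rightarrow> nat) \<Rightarrow> real" where
  "pi_max n K z = Max ((\<lambda>k. real (card {i \<in> {1..n}. z i = k}) / real n) ` {..<K})"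

end

theory Submission
  imports Defs
begin

(* Where N_ij >= tau, the PACE entry is the mean of the N_ij subsample entries Chat^(l)_ij, and on
   those subsamples C_ij = C^(S_l)_ij; by Cauchy-Schwarz its squared error is at most
   (1/tau) * sum_l (Chat^(l)_ij - C^(S_l)_ij)^2.  Where N_ij < tau the entry is 0 and the error is
   C_ij in {0,1}.  Summing over entries, taking expectations and using that the subsamples are
   identically distributed gives the first bound, since a row of C has at most n * pi_max ones.

   For the second bound, a subsample smaller than m_star costs at most n^2.  On a large one,
   relabel Zhat_S by the optimal permutation: if i and j are both correctly labelled then
   Chat_ij = C_ij, so the error is at most 2|S| times the number of misclassified nodes, each of
   which is a nonzero entry of Zhat_S Q - Z_S. *)

lemma power2_mean_diff_le:
  fixes f :: "'a \<Rightarrow> real"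
  assumes "finite L" and "L \<noteq> {}"
  shows "((\<Sum>l\<in>L. f l) / card L - c)^2 \<le> (\<Sum>l\<in>L. (f l - c)^2) / card L"
proof -
  have pos: "0 < real (card L)"
    using assms by (simp add: card_gt_0_iff)
  have "(\<Sum>l\<in>L. f l) / card L - c = (\<Sum>l\<in>L. 1 * (f l - c)) / card L"
    using pos by (simp add: sum_subtractf field_simps)
  then have "((\<Sum>l\<in>L. f l) / card L - c)^2 = (\<Sum>l\<in>L. 1 * (f l - c))^2 / (card L)^2"
    by (simp add: power_divide)
  also have "\<dots> \<le> (\<Sum>l\<in>L. 1^2) * (\<Sum>l\<in>L. (f l - c)^2) / (card L)^2"
    by (intro divide_right_mono Cauchy_Schwarz_ineq_sum) simp
  also have "\<dots> = (\<Sum>l\<in>L. (f l - c)^2) / card L"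
    using pos by (simp add: power2_eq_square)
  finally show ?thesis .
qed

lemma pace_sq_err_le:
  fixes S :: "nat \<Rightarrow> nat set" and Ch :: "nat \<Rightarrow> nat \<Rightarrow> nat \<Rightarrow> real"
  assumes tau: "\<tau> > 0" and Ch_out: "\<And>l. \<not> (i \<in> S l \<and> j \<in> S l) \<Longrightarrow> Ch l i j = 0"
  shows "(pace T \<tau> S Ch i j - cmat z i j)^2
    \<le> (\<Sum>l\<in>{1..T}. (Ch l i j - cmat_S z (S l) i j)^2) / \<tau>
      + cmat z i j * of_bool (real (Ncount T S i j) < \<tau>)"
proof -
  define L where "L = {l \<in> {1..T}. i \<in> S l \<and> j \<in> S l}"
  have N_eq: "Ncount T S i j = card L"
    by (simp add: Ncount_def L_def)
  have err_nonneg: "0 \<le> (\<Sum>l\<in>{1..T}. (Ch l i j - cmat_S z (S l) i j)^2) / \<tau>"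
    using tau by (simp add: sum_nonneg)
  show ?thesis
  proof (cases "\<tau> \<le> real (card L)")
    case False
    then show ?thesis
      using err_nonneg by (auto simp: pace_def N_eq cmat_def)
  next
    case True
    then have "L \<noteq> {}"
      using tau by auto
    have "(\<Sum>l\<in>{1..T}. (if i \<in> S l \<and> j \<in> S l then 1 else 0) * Ch l i j) = (\<Sum>l\<in>L. Ch l i j)"
      unfolding L_def by (subst sum.inter_filter) (auto intro: sum.cong)
    then have "pace T \<tau> S Ch i j = (\<Sum>l\<in>L. Ch l i j) / card L"
      using True by (simp add: pace_def N_eq)
    then have "(pace T \<tau> S Ch i j - cmat z i j)^2 \<le> (\<Sum>l\<in>L. (Ch l i j - cmat z i j)^2) / card L"
      using power2_mean_diff_le[OF _ \<open>L \<noteq> {}\<close>] by (simp add: L_def)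
    also have "\<dots> \<le> (\<Sum>l\<in>L. (Ch l i j - cmat z i j)^2) / \<tau>"
      using True tau by (intro divide_left_mono sum_nonneg) auto
    also have "\<dots> = (\<Sum>l\<in>L. (Ch l i j - cmat_S z (S l) i j)^2) / \<tau>"
      by (intro arg_cong[where f = "\<lambda>x. x / \<tau>"] sum.cong) (auto simp: L_def cmat_S_def)
    also have "\<dots> \<le> (\<Sum>l\<in>{1..T}. (Ch l i j - cmat_S z (S l) i j)^2) / \<tau>"
      using tau by (intro divide_right_mono sum_mono2) (auto simp: L_def)
    finally show ?thesis
      by (simp add: cmat_def add_increasing2)
  qed
qed

lemma delta_tilde_pace_le:
  assumes tau: "\<tau> > 0" and Ch_out: "\<And>l i j. \<not> (i \<in> S l \<and> j \<in> S l) \<Longrightarrow> Ch l i j = 0"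
  shows "delta_tilde n (pace T \<tau> S Ch) (cmat z)
    \<le> (\<Sum>l\<in>{1..T}. frob2 n (Ch l) (cmat_S z (S l))) / (\<tau> * (real n)^2)
      + (\<Sum>i\<in>{1..n}. \<Sum>j\<in>{1..n}. cmat z i j * of_bool (real (Ncount T S i j) < \<tau>)) / (real n)^2"
proof -
  let ?D = "\<lambda>l i j. (Ch l i j - cmat_S z (S l) i j)^2"
  let ?miss = "\<lambda>i j. cmat z i j * of_bool (real (Ncount T S i j) < \<tau>)"
  have "frob2 n (pace T \<tau> S Ch) (cmat z)
      \<le> (\<Sum>i\<in>{1..n}. \<Sum>j\<in>{1..n}. (\<Sum>l\<in>{1..T}. ?D l i j) / \<tau> + ?miss i j)"
    unfolding frob2_def by (intro sum_mono pace_sq_err_le tau Ch_out)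
  also have "\<dots> = (\<Sum>i\<in>{1..n}. \<Sum>j\<in>{1..n}. \<Sum>l\<in>{1..T}. ?D l i j) / \<tau>
      + (\<Sum>i\<in>{1..n}. \<Sum>j\<in>{1..n}. ?miss i j)"
    by (simp add: sum.distrib sum_divide_distrib)
  also have "(\<Sum>i\<in>{1..n}. \<Sum>j\<in>{1..n}. \<Sum>l\<in>{1..T}. ?D l i j)
      = (\<Sum>l\<in>{1..T}. frob2 n (Ch l) (cmat_S z (S l)))"
    unfolding frob2_def by (subst sum.swap, rule sum.cong[OF refl], subst sum.swap, rule refl)
  finally have "frob2 n (pace T \<tau> S Ch) (cmat z) / (real n)^2
      \<le> ((\<Sum>l\<in>{1..T}. frob2 n (Ch l) (cmat_S z (S l))) / \<tau>
         + (\<Sum>i\<in>{1..n}. \<Sum>j\<in>{1..n}. ?miss i j)) / (real n)^2"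
    by (rule divide_right_mono) simp
  then show ?thesis
    unfolding delta_tilde_def by (simp only: add_divide_distrib divide_divide_eq_left)
qed

lemma sum_cmat_row_le:
  assumes z: "z ` {1..n} \<subseteq> {..<K}" and i: "i \<in> {1..n}"
  shows "(\<Sum>j\<in>{1..n}. cmat z i j) \<le> real n * pi_max n K z"
proof -
  have "{1..n} \<inter> {j. z i = z j} = {j \<in> {1..n}. z j = z i}"
    by auto
  then have "(\<Sum>j\<in>{1..n}. cmat z i j) = real (card {j \<in> {1..n}. z j = z i})"
    by (simp add: cmat_def of_bool_def[symmetric])
  also have "\<dots> = real n * (real (card {j \<in> {1..n}. z j = z i}) / real n)"
    using i by simp
  also have "\<dots> \<le> real n * pi_max n K z"
    unfolding pi_max_def using i z
    by (intro mult_left_mono Max_ge) (auto simp: image_subset_iff intro!: image_eqI[where x = "z i"])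
  finally show ?thesis .
qed

lemma sum_cmat_mult_le:
  assumes z: "z ` {1..n} \<subseteq> {..<K}"
    and p: "\<And>i j. i \<in> {1..n} \<Longrightarrow> j \<in> {1..n} \<Longrightarrow> 0 \<le> p i j \<and> p i j \<le> c"
  shows "(\<Sum>i\<in>{1..n}. \<Sum>j\<in>{1..n}. cmat z i j * p i j) \<le> (real n)^2 * pi_max n K z * c"
proof (cases "n = 0")
  case False
  then have c: "0 \<le> c"
    using p[of 1 1] by auto
  have "(\<Sum>i\<in>{1..n}. \<Sum>j\<in>{1..n}. cmat z i j * p i j) \<le> (\<Sum>i\<in>{1..n}. \<Sum>j\<in>{1..n}. cmat z i j) * c"
    unfolding sum_distrib_right by (intro sum_mono mult_left_mono) (auto simp: p cmat_def)
  also have "\<dots> \<le> (\<Sum>i\<in>{1..n}. real n * pi_max n K z) * c"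
    by (intro mult_right_mono sum_mono sum_cmat_row_le z c)
  also have "\<dots> = (real n)^2 * pi_max n K z * c"
    by (simp add: power2_eq_square)
  finally show ?thesis .
qed simp

lemma frob2_nonneg: "0 \<le> frob2 n A B"
  unfolding frob2_def by (intro sum_nonneg) simp

lemma frob2_chat_S_le: "frob2 n (chat_S mstar S zh) (cmat_S z S) \<le> (real n)^2"
proof -
  have "frob2 n (chat_S mstar S zh) (cmat_S z S) \<le> (\<Sum>i\<in>{1..n}. \<Sum>j\<in>{1..n}. 1)"
    unfolding frob2_def by (intro sum_mono) (auto simp: chat_S_def cmat_S_def cmat_def)
  then show ?thesis
    by (simp add: power2_eq_square)
qed

definition mismatches :: "nat \<Rightarrow> nat set \<Rightarrow> (nat \<Rightarrow> nat) \<Rightarrow> (nat \<Rightarrow> nat) \<Rightarrow> (nat \<Rightarrow> nat)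
    \<Rightarrow> (nat \<times> nat) set" where
  "mismatches K S zh z \<sigma> =
     {(i, k). i \<in> S \<and> k < K \<and> (\<Sum>l<K. memb zh i l * pmat \<sigma> l k) \<noteq> memb z i k}"

lemma delta_mis_eq_Min:
  "delta_mis K S zh z = Min ((\<lambda>\<sigma>. real (card (mismatches K S zh z \<sigma>)) / real (card S))
     ` {\<sigma>. \<sigma> permutes {..<K}})"
  by (simp add: delta_mis_def mismatches_def)

lemma delta_mis_infinite: "infinite S \<Longrightarrow> delta_mis K S zh z = 0"
proof -
  assume "infinite S"
  moreover have "(\<lambda>\<sigma>. 0) ` {\<sigma>. \<sigma> permutes {..<K}} = {0 :: real}"
    using permutes_id by blast
  ultimately show ?thesis
    by (simp add: delta_mis_eq_Min)
qed

lemma delta_mis_attained: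
  obtains \<sigma> where "\<sigma> permutes {..<K}"
    and "delta_mis K S zh z = real (card (mismatches K S zh z \<sigma>)) / real (card S)"
proof -
  have "delta_mis K S zh z \<in> (\<lambda>\<sigma>. real (card (mismatches K S zh z \<sigma>)) / real (card S))
      ` {\<sigma>. \<sigma> permutes {..<K}}"
    unfolding delta_mis_eq_Min
    by (intro Min_in finite_imageI finite_permutations) (auto intro: permutes_id)
  then show ?thesis
    using that by blast
qed

lemma delta_mis_nonneg: "0 \<le> delta_mis K S zh z"
  by (rule delta_mis_attained[where K = K and S = S and zh = zh and z = z]) simp

lemma delta_mis_le: "delta_mis K S zh z \<le> real K"
proof (cases "finite S")
  case True
  have "card (mismatches K S zh z id) \<le> card (S \<times> {..<K})"
    by (rule card_mono) (auto simp: mismatches_def True)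
  then have "real (card (mismatches K S zh z id)) \<le> real (card S) * real K"
    by (simp add: card_cartesian_product flip: of_nat_mult)
  then have "real (card (mismatches K S zh z id)) / real (card S) \<le> real K"
    by (cases "card S = 0") (simp_all add: field_simps)
  moreover have "delta_mis K S zh z \<le> real (card (mismatches K S zh z id)) / real (card S)"
    unfolding delta_mis_eq_Min by (intro Min_le finite_imageI finite_permutations) (auto intro: permutes_id)
  ultimately show ?thesis
    by linarith
qed (simp add: delta_mis_infinite)

lemma memb_pmat_sum:
  assumes "zh i < K"
  shows "(\<Sum>l<K. memb zh i l * pmat \<sigma> l k) = of_bool (\<sigma> (zh i) = k)"
proof -
  have "(\<Sum>l<K. memb zh i l * pmat \<sigma> l k) = (\<Sum>l<K. if zh i = l then pmat \<sigma> (zh i) k else 0)"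
    by (intro sum.cong) (auto simp: memb_def)
  also have "\<dots> = pmat \<sigma> (zh i) k"
    using assms by simp
  finally show ?thesis
    by (simp add: pmat_def)
qed

lemma card_misclassified_le_mismatches:
  assumes "finite S" and "zh ` S \<subseteq> {..<K}" and "z ` S \<subseteq> {..<K}"
  shows "card {i \<in> S. \<sigma> (zh i) \<noteq> z i} \<le> card (mismatches K S zh z \<sigma>)"
proof (rule card_inj_on_le[of "\<lambda>i. (i, z i)"])
  show "inj_on (\<lambda>i. (i, z i)) {i \<in> S. \<sigma> (zh i) \<noteq> z i}"
    by (auto simp: inj_on_def)
  show "(\<lambda>i. (i, z i)) ` {i \<in> S. \<sigma> (zh i) \<noteq> z i} \<subseteq> mismatches K S zh z \<sigma>"
  proof clarify
    fix i
    assume i: "i \<in> S" "\<sigma> (zh i) \<noteq> z i"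
    then have "zh i < K" "z i < K"
      using assms by auto
    then show "(i, z i) \<in> mismatches K S zh z \<sigma>"
      using i by (simp add: mismatches_def memb_pmat_sum memb_def[of z])
  qed
  show "finite (mismatches K S zh z \<sigma>)"
    by (rule finite_subset[of _ "S \<times> {..<K}"]) (auto simp: mismatches_def assms)
qed

lemma frob2_chat_S_le_misclassified:
  assumes S: "S \<subseteq> {1..n}" and large: "mstar \<le> card S" and \<sigma>: "inj \<sigma>"
  shows "frob2 n (chat_S mstar S zh) (cmat_S z S)
    \<le> 2 * real (card {i \<in> S. \<sigma> (zh i) \<noteq> z i}) * real (card S)"
proof -
  define B where "B = {i \<in> S. \<sigma> (zh i) \<noteq> z i}"
  have entry: "(chat_S mstar S zh i j - cmat_S z S i j)^2
      \<le> of_bool (i \<in> B) * of_bool (j \<in> S) + of_bool (i \<in> S) * of_bool (j \<in> B)" for i j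
  proof (cases "i \<in> S \<and> j \<in> S \<and> i \<notin> B \<and> j \<notin> B")
    case True
    then have "\<sigma> (zh i) = z i" "\<sigma> (zh j) = z j"
      by (auto simp: B_def)
    then have "(zh i = zh j) = (z i = z j)"
      using \<sigma> by (metis injD)
    then show ?thesis
      using True large by (simp add: chat_S_def cmat_S_def cmat_def)
  next
    case False
    then consider "\<not> (i \<in> S \<and> j \<in> S)" | "i \<in> B \<and> j \<in> S" | "i \<in> S \<and> j \<in> B"
      by (auto simp: B_def)
    then show ?thesis
      by cases (auto simp: chat_S_def cmat_S_def cmat_def B_def)
  qed
  have card_sum: "(\<Sum>j\<in>{1..n}. of_bool (j \<in> A)) = real (card A)" if "A \<subseteq> {1..n}" for A
    using that by (simp add: Int_absorb1)
  have B_sub: "B \<subseteq> {1..n}"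
    using S by (auto simp: B_def)
  have "frob2 n (chat_S mstar S zh) (cmat_S z S)
      \<le> (\<Sum>i\<in>{1..n}. \<Sum>j\<in>{1..n}. of_bool (i \<in> B) * of_bool (j \<in> S) + of_bool (i \<in> S) * of_bool (j \<in> B))"
    unfolding frob2_def by (intro sum_mono entry)
  also have "\<dots> = (\<Sum>i\<in>{1..n}. of_bool (i \<in> B)) * (\<Sum>j\<in>{1..n}. of_bool (j \<in> S))
      + (\<Sum>i\<in>{1..n}. of_bool (i \<in> S)) * (\<Sum>j\<in>{1..n}. of_bool (j \<in> B))"
    by (simp only: sum.distrib sum_product)
  also have "\<dots> = 2 * real (card B) * real (card S)"
    by (simp only: card_sum S B_sub) simp
  finally show ?thesis
    unfolding B_def .
qed

lemma frob2_chat_S_le_delta_mis: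
  assumes S: "S \<subseteq> {1..n}" and zh: "zh ` S \<subseteq> {..<K}" and z: "z ` S \<subseteq> {..<K}"
    and large: "mstar \<le> card S"
  shows "frob2 n (chat_S mstar S zh) (cmat_S z S) \<le> 4 * (real (card S))^2 * delta_mis K S zh z"
proof -
  obtain \<sigma> where \<sigma>: "\<sigma> permutes {..<K}"
    and \<delta>: "delta_mis K S zh z = real (card (mismatches K S zh z \<sigma>)) / real (card S)"
    by (rule delta_mis_attained)
  have "finite S"
    using S finite_subset by blast
  have "frob2 n (chat_S mstar S zh) (cmat_S z S)
      \<le> 2 * real (card {i \<in> S. \<sigma> (zh i) \<noteq> z i}) * real (card S)"
    using S large permutes_inj[OF \<sigma>] by (rule frob2_chat_S_le_misclassified)
  also have "\<dots> \<le> 2 * real (card (mismatches K S zh z \<sigma>)) * real (card S)"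
    using card_misclassified_le_mismatches[OF \<open>finite S\<close> zh z] by (simp add: mult_right_mono)
  also have "\<dots> \<le> 4 * (real (card S))^2 * delta_mis K S zh z"
    by (cases "card S = 0") (simp_all add: \<delta> power2_eq_square)
  finally show ?thesis .
qed

lemma frob2_chat_S_le_cases:
  assumes S: "S \<subseteq> {1..n}" and zh: "zh ` S \<subseteq> {..<K}" and z: "z ` {1..n} \<subseteq> {..<K}"
  shows "frob2 n (chat_S mstar S zh) (cmat_S z S)
    \<le> (real n)^2 * of_bool (card S < mstar)
      + 4 * ((real (card S))^2 * delta_mis K S zh z * (if mstar \<le> card S then 1 else 0))"
proof (cases "card S < mstar")
  case True
  then show ?thesis
    using frob2_chat_S_le by simp
next
  case False
  have "z ` S \<subseteq> {..<K}"
    using z S by auto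
  then have "frob2 n (chat_S mstar S zh) (cmat_S z S) \<le> 4 * (real (card S))^2 * delta_mis K S zh z"
    using False by (intro frob2_chat_S_le_delta_mis S zh) simp_all
  with False show ?thesis
    by simp
qed

lemma measurable_count_space_UNIV_comp:
  assumes "X \<in> measurable M (count_space UNIV)" and "f \<in> UNIV \<rightarrow> space N"
  shows "(\<lambda>\<omega>. f (X \<omega>)) \<in> measurable M N"
  using measurable_compose[OF assms(1)] assms(2) by simp

lemma measurable_compose_finite_valued:
  assumes g: "g \<in> measurable M (count_space UNIV)" and g_in: "\<And>\<omega>. \<omega> \<in> space M \<Longrightarrow> g \<omega> \<in> I"
    and I: "finite I" and f: "\<And>i. i \<in> I \<Longrightarrow> (\<lambda>\<omega>. f i \<omega>) \<in> measurable M N"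
  shows "(\<lambda>\<omega>. f (g \<omega>) \<omega>) \<in> measurable M N"
proof (rule measurable_compose_countable'[OF f _ countable_finite[OF I]])
  show "g \<in> measurable M (count_space I)"
    unfolding measurable_count_space_eq2[OF I] using g_in measurable_sets[OF g] by auto
qed

lemma integral_comp_eq_if_distr_eq:
  fixes f :: "'b \<Rightarrow> real"
  assumes X: "X \<in> measurable M N" and Y: "Y \<in> measurable M N"
    and distr_eq: "distr M N X = distr M N Y" and f: "f \<in> borel_measurable N"
  shows "(\<integral>\<omega>. f (X \<omega>) \<partial>M) = (\<integral>\<omega>. f (Y \<omega>) \<partial>M)"
  using integral_distr[OF X f] integral_distr[OF Y f] distr_eq by simp

lemma Ncount_eq_sum: "real (Ncount T S i j) = (\<Sum>l\<in>{1..T}. of_bool (i \<in> S l \<and> j \<in> S l))"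
proof -
  have "{l \<in> {1..T}. i \<in> S l \<and> j \<in> S l} = {1..T} \<inter> {l. i \<in> S l \<and> j \<in> S l}"
    by auto
  then show ?thesis
    by (simp add: Ncount_def)
qed

lemma borel_measurable_delta_mis:
  assumes zh: "\<And>i. (\<lambda>\<omega>. zh \<omega> i) \<in> measurable M (count_space UNIV)"
  shows "(\<lambda>\<omega>. delta_mis K S (zh \<omega>) z) \<in> borel_measurable M"
proof (cases "finite S")
  case True
  \<comment> \<open>whether \<open>(i, k)\<close> is a mismatch depends on \<open>zh \<omega>\<close> only through the value \<open>v = zh \<omega> i\<close>\<close>
  define wrong where "wrong \<sigma> i k v \<longleftrightarrow> (\<Sum>l<K. of_bool (v = l) * pmat \<sigma> l k) \<noteq> memb z i k"
    for \<sigma> i k v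
  have "real (card (mismatches K S (zh \<omega>) z \<sigma>))
      = (\<Sum>p\<in>S \<times> {..<K}. of_bool (wrong \<sigma> (fst p) (snd p) (zh \<omega> (fst p))))" for \<omega> \<sigma>
  proof -
    have "mismatches K S (zh \<omega>) z \<sigma> = (S \<times> {..<K}) \<inter> {p. wrong \<sigma> (fst p) (snd p) (zh \<omega> (fst p))}"
      by (auto simp: mismatches_def wrong_def memb_def[of "zh \<omega>"] of_bool_def)
    then show ?thesis
      using True by simp
  qed
  then have "(\<lambda>\<omega>. delta_mis K S (zh \<omega>) z) = (\<lambda>\<omega>. Min ((\<lambda>\<sigma>.
      (\<Sum>p\<in>S \<times> {..<K}. of_bool (wrong \<sigma> (fst p) (snd p) (zh \<omega> (fst p)))) / real (card S))
      ` {\<sigma>. \<sigma> permutes {..<K}}))"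
    by (simp add: delta_mis_eq_Min)
  moreover have "(\<lambda>\<omega>. of_bool (wrong \<sigma> i k (zh \<omega> i)) :: real) \<in> borel_measurable M" for \<sigma> i k
    by (rule measurable_count_space_UNIV_comp[OF zh]) simp
  ultimately show ?thesis
    by (simp only:) (intro borel_measurable_Min finite_permutations borel_measurable_divide
        borel_measurable_sum borel_measurable_const finite_lessThan)
qed (simp add: delta_mis_infinite)

context prob_space
begin

lemma expected_subsample_error_le:
  fixes S0 :: "'a \<Rightarrow> nat set" and Zh0 :: "'a \<Rightarrow> nat \<Rightarrow> nat"
  assumes z: "z ` {1..n} \<subseteq> {..<K}"
    and S0_sub: "\<And>\<omega>. \<omega> \<in> space M \<Longrightarrow> S0 \<omega> \<subseteq> {1..n}"
    and Zh0_lab: "\<And>\<omega>. \<omega> \<in> space M \<Longrightarrow> Zh0 \<omega> ` S0 \<omega> \<subseteq> {..<K}"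
    and meas_pair0: "(\<lambda>\<omega>. (S0 \<omega>, chat_S mstar (S0 \<omega>) (Zh0 \<omega>))) \<in> measurable M (count_space UNIV)"
    and meas_Zh0: "\<And>i. (\<lambda>\<omega>. Zh0 \<omega> i) \<in> measurable M (count_space UNIV)"
  shows "expectation (\<lambda>\<omega>. frob2 n (chat_S mstar (S0 \<omega>) (Zh0 \<omega>)) (cmat_S z (S0 \<omega>)))
    \<le> (real n)^2 * prob {\<omega> \<in> space M. card (S0 \<omega>) < mstar}
      + 4 * expectation (\<lambda>\<omega>. (real (card (S0 \<omega>)))^2 * delta_mis K (S0 \<omega>) (Zh0 \<omega>) z
                              * (if mstar \<le> card (S0 \<omega>) then 1 else 0))"
proof -
  define small where "small = {\<omega> \<in> space M. card (S0 \<omega>) < mstar}"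
  define X where "X \<omega> = (real (card (S0 \<omega>)))^2 * delta_mis K (S0 \<omega>) (Zh0 \<omega>) z
    * (if mstar \<le> card (S0 \<omega>) then 1 else 0)" for \<omega>
  have S0_meas: "S0 \<in> measurable M (count_space UNIV)"
    using measurable_count_space_UNIV_comp[OF meas_pair0, of fst] by simp
  then have small_sets: "small \<in> sets M"
    unfolding small_def pred_def[symmetric] by (rule measurable_count_space_UNIV_comp) simp
  have "S0 \<omega> \<in> Pow {1..n}" if "\<omega> \<in> space M" for \<omega>
    using S0_sub[OF that] by simp
  then have "X \<in> borel_measurable M"
    unfolding X_def[abs_def]
    by (rule measurable_compose_finite_valued[OF S0_meas])
      (auto intro!: borel_measurable_times borel_measurable_delta_mis meas_Zh0)
  moreover have "norm (X \<omega>) \<le> (real n)^2 * real K" if "\<omega> \<in> space M" for \<omega>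
  proof -
    have "card (S0 \<omega>) \<le> n"
      using card_mono[OF _ S0_sub[OF that]] by simp
    then have "(real (card (S0 \<omega>)))^2 \<le> (real n)^2"
      by (simp add: power_mono)
    then show ?thesis
      unfolding X_def using delta_mis_nonneg delta_mis_le by (auto intro!: mult_mono)
  qed
  ultimately have X_int: "integrable M X"
    by (intro integrable_const_bound[where B = "(real n)^2 * real K"]) auto
  have small_int: "integrable M (indicator small :: 'a \<Rightarrow> real)"
    using small_sets by (intro integrable_real_indicator) (auto simp: less_top[symmetric])
  have "expectation (\<lambda>\<omega>. frob2 n (chat_S mstar (S0 \<omega>) (Zh0 \<omega>)) (cmat_S z (S0 \<omega>)))
      \<le> expectation (\<lambda>\<omega>. (real n)^2 * indicator small \<omega> + 4 * X \<omega>)"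
  proof (rule integral_mono')
    show "integrable M (\<lambda>\<omega>. (real n)^2 * indicator small \<omega> + 4 * X \<omega>)"
      using small_int X_int by (intro Bochner_Integration.integrable_add integrable_mult_right)
    fix \<omega>
    assume \<omega>: "\<omega> \<in> space M"
    then show "frob2 n (chat_S mstar (S0 \<omega>) (Zh0 \<omega>)) (cmat_S z (S0 \<omega>))
        \<le> (real n)^2 * indicator small \<omega> + 4 * X \<omega>"
      using frob2_chat_S_le_cases[OF S0_sub[OF \<omega>] Zh0_lab[OF \<omega>] z]
      by (simp add: small_def X_def indicator_def)
    show "0 \<le> (real n)^2 * indicator small \<omega> + 4 * X \<omega>"
      unfolding X_def using delta_mis_nonneg by simp
  qed
  also have "\<dots> = (real n)^2 * prob small + 4 * expectation X"
    using small_int X_int sets.sets_into_space[OF small_sets]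
    by (simp add: Bochner_Integration.integral_add Int_absorb2)
  finally show ?thesis
    unfolding small_def X_def .
qed

lemma expectation_double_sum_indicator:
  assumes "\<And>i j. i \<in> I \<Longrightarrow> j \<in> J \<Longrightarrow> A i j \<in> events"
  shows "expectation (\<lambda>\<omega>. \<Sum>i\<in>I. \<Sum>j\<in>J. c i j * indicator (A i j) \<omega>)
    = (\<Sum>i\<in>I. \<Sum>j\<in>J. c i j * prob (A i j))"
proof -
  have int: "integrable M (\<lambda>\<omega>. c i j * indicator (A i j) \<omega> :: real)" if "i \<in> I" "j \<in> J" for i j
    using assms[OF that] by (intro integrable_mult_right integrable_real_indicator)
      (auto simp: less_top[symmetric])
  have "expectation (\<lambda>\<omega>. \<Sum>i\<in>I. \<Sum>j\<in>J. c i j * indicator (A i j) \<omega>)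
      = (\<Sum>i\<in>I. \<Sum>j\<in>J. expectation (\<lambda>\<omega>. c i j * indicator (A i j) \<omega>))"
    using int by (simp add: Bochner_Integration.integral_sum Bochner_Integration.integrable_sum
        del: sum_mult_indicator)
  also have "\<dots> = (\<Sum>i\<in>I. \<Sum>j\<in>J. c i j * prob (A i j))"
    using assms sets.sets_into_space by (intro sum.cong refl) (simp add: Int_absorb2)
  finally show ?thesis .
qed

lemma events_Ncount_less:
  assumes "\<And>l. l \<in> {1..T} \<Longrightarrow> (\<lambda>\<omega>. S l \<omega>) \<in> measurable M (count_space UNIV)"
  shows "{\<omega> \<in> space M. real (Ncount T (\<lambda>l. S l \<omega>) i j) < \<tau>} \<in> events"
proof -
  have "(\<lambda>\<omega>. of_bool (i \<in> S l \<omega> \<and> j \<in> S l \<omega>) :: real) \<in> borel_measurable M" if "l \<in> {1..T}" for l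
    by (rule measurable_count_space_UNIV_comp[OF assms[OF that]]) simp
  then have "(\<lambda>\<omega>. real (Ncount T (\<lambda>l. S l \<omega>) i j)) \<in> borel_measurable M"
    by (simp only: Ncount_eq_sum) (rule borel_measurable_sum)
  then show ?thesis
    by (rule borel_measurable_less[OF _ borel_measurable_const])
qed

lemma expected_delta_tilde_pace_le:
  fixes S :: "nat \<Rightarrow> 'a \<Rightarrow> nat set" and Ch :: "nat \<Rightarrow> 'a \<Rightarrow> nat \<Rightarrow> nat \<Rightarrow> real"
  assumes tau: "0 < \<tau>"
    and S_meas: "\<And>l. l \<in> {1..T} \<Longrightarrow> (\<lambda>\<omega>. S l \<omega>) \<in> measurable M (count_space UNIV)"
    and Ch_out: "\<And>l \<omega> i j. \<not> (i \<in> S l \<omega> \<and> j \<in> S l \<omega>) \<Longrightarrow> Ch l \<omega> i j = 0"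
    and err_int: "\<And>l. l \<in> {1..T} \<Longrightarrow> integrable M (\<lambda>\<omega>. frob2 n (Ch l \<omega>) (cmat_S z (S l \<omega>)))"
  shows "expectation (\<lambda>\<omega>. delta_tilde n (pace T \<tau> (\<lambda>l. S l \<omega>) (\<lambda>l. Ch l \<omega>)) (cmat z))
    \<le> (\<Sum>l\<in>{1..T}. expectation (\<lambda>\<omega>. frob2 n (Ch l \<omega>) (cmat_S z (S l \<omega>)))) / (\<tau> * (real n)^2)
      + (\<Sum>i\<in>{1..n}. \<Sum>j\<in>{1..n}.
          cmat z i j * prob {\<omega> \<in> space M. real (Ncount T (\<lambda>l. S l \<omega>) i j) < \<tau>}) / (real n)^2"
proof -
  define few where "few i j = {\<omega> \<in> space M. real (Ncount T (\<lambda>l. S l \<omega>) i j) < \<tau>}" for i j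
  have few_sets: "few i j \<in> events" for i j
    unfolding few_def using S_meas by (rule events_Ncount_less)
  define bound where "bound \<omega> = (\<Sum>l\<in>{1..T}. frob2 n (Ch l \<omega>) (cmat_S z (S l \<omega>))) / (\<tau> * (real n)^2)
    + (\<Sum>i\<in>{1..n}. \<Sum>j\<in>{1..n}. cmat z i j * indicator (few i j) \<omega>) / (real n)^2" for \<omega>
  have sum_err_int: "integrable M (\<lambda>\<omega>. \<Sum>l\<in>{1..T}. frob2 n (Ch l \<omega>) (cmat_S z (S l \<omega>)))"
    using err_int by (intro Bochner_Integration.integrable_sum) auto
  have sum_few_int:
    "integrable M (\<lambda>\<omega>. \<Sum>i\<in>{1..n}. \<Sum>j\<in>{1..n}. cmat z i j * indicator (few i j) \<omega>)"
    using few_sets by (intro Bochner_Integration.integrable_sum integrable_mult_right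
        integrable_real_indicator) (auto simp: less_top[symmetric])
  have "expectation (\<lambda>\<omega>. delta_tilde n (pace T \<tau> (\<lambda>l. S l \<omega>) (\<lambda>l. Ch l \<omega>)) (cmat z))
    \<le> expectation bound"
  proof (rule integral_mono')
    show "integrable M bound"
      unfolding bound_def using sum_err_int sum_few_int by simp
    fix \<omega>
    assume "\<omega> \<in> space M"
    then show "delta_tilde n (pace T \<tau> (\<lambda>l. S l \<omega>) (\<lambda>l. Ch l \<omega>)) (cmat z) \<le> bound \<omega>"
      unfolding bound_def few_def using delta_tilde_pace_le[OF tau, of "\<lambda>l. S l \<omega>" "\<lambda>l. Ch l \<omega>"] Ch_out
      by (simp add: indicator_def del: sum_mult_indicator)
    show "0 \<le> bound \<omega>"
      unfolding bound_def using tau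
      by (intro add_nonneg_nonneg divide_nonneg_nonneg sum_nonneg mult_nonneg_nonneg frob2_nonneg)
        (auto simp: cmat_def)
  qed
  also have "\<dots> = (\<Sum>l\<in>{1..T}. expectation (\<lambda>\<omega>. frob2 n (Ch l \<omega>) (cmat_S z (S l \<omega>))))
      / (\<tau> * (real n)^2) + (\<Sum>i\<in>{1..n}. \<Sum>j\<in>{1..n}. cmat z i j * prob (few i j)) / (real n)^2"
  proof -
    have "expectation (\<lambda>\<omega>. \<Sum>l\<in>{1..T}. frob2 n (Ch l \<omega>) (cmat_S z (S l \<omega>)))
        = (\<Sum>l\<in>{1..T}. expectation (\<lambda>\<omega>. frob2 n (Ch l \<omega>) (cmat_S z (S l \<omega>))))"
      using err_int by (simp add: Bochner_Integration.integral_sum)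
    moreover have "expectation (\<lambda>\<omega>. \<Sum>i\<in>{1..n}. \<Sum>j\<in>{1..n}. cmat z i j * indicator (few i j) \<omega>)
        = (\<Sum>i\<in>{1..n}. \<Sum>j\<in>{1..n}. cmat z i j * prob (few i j))"
      by (rule expectation_double_sum_indicator) (rule few_sets)
    ultimately show ?thesis
      unfolding bound_def
      by (simp only: Bochner_Integration.integral_add[OF integrable_divide_zero[OF sum_err_int]
          integrable_divide_zero[OF sum_few_int]] integral_divide_zero)
  qed
  finally show ?thesis
    unfolding few_def .
qed

lemma expected_pace_error_le:
  fixes S :: "nat \<Rightarrow> 'a \<Rightarrow> nat set" and Zh :: "nat \<Rightarrow> 'a \<Rightarrow> nat \<Rightarrow> nat"
    and S0 :: "'a \<Rightarrow> nat set" and Zh0 :: "'a \<Rightarrow> nat \<Rightarrow> nat"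
  assumes n: "1 \<le> n" and tau: "0 < \<tau>" and z: "z ` {1..n} \<subseteq> {..<K}"
    and meas_pair: "\<And>l. l \<in> {1..T} \<Longrightarrow>
          (\<lambda>\<omega>. (S l \<omega>, chat_S mstar (S l \<omega>) (Zh l \<omega>))) \<in> measurable M (count_space UNIV)"
    and meas_pair0: "(\<lambda>\<omega>. (S0 \<omega>, chat_S mstar (S0 \<omega>) (Zh0 \<omega>))) \<in> measurable M (count_space UNIV)"
    and ident: "\<And>l. l \<in> {1..T} \<Longrightarrow>
          distr M (count_space UNIV) (\<lambda>\<omega>. (S l \<omega>, chat_S mstar (S l \<omega>) (Zh l \<omega>)))
        = distr M (count_space UNIV) (\<lambda>\<omega>. (S0 \<omega>, chat_S mstar (S0 \<omega>) (Zh0 \<omega>)))"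
  shows "expectation (\<lambda>\<omega>. delta_tilde n
      (pace T \<tau> (\<lambda>l. S l \<omega>) (\<lambda>l. chat_S mstar (S l \<omega>) (Zh l \<omega>))) (cmat z))
    \<le> real T / (\<tau> * (real n)^2)
        * expectation (\<lambda>\<omega>. frob2 n (chat_S mstar (S0 \<omega>) (Zh0 \<omega>)) (cmat_S z (S0 \<omega>)))
      + pi_max n K z * Max ((\<lambda>(i, j). prob {\<omega> \<in> space M. real (Ncount T (\<lambda>l. S l \<omega>) i j) < \<tau>})
                              ` ({1..n} \<times> {1..n}))"
proof -
  define err0 where "err0 \<omega> = frob2 n (chat_S mstar (S0 \<omega>) (Zh0 \<omega>)) (cmat_S z (S0 \<omega>))" for \<omega>
  define few where "few i j = {\<omega> \<in> space M. real (Ncount T (\<lambda>l. S l \<omega>) i j) < \<tau>}" for i j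
  define q where "q = Max ((\<lambda>(i, j). prob (few i j)) ` ({1..n} \<times> {1..n}))"
  let ?err = "\<lambda>l \<omega>. frob2 n (chat_S mstar (S l \<omega>) (Zh l \<omega>)) (cmat_S z (S l \<omega>))"
  have S_meas: "(\<lambda>\<omega>. S l \<omega>) \<in> measurable M (count_space UNIV)" if "l \<in> {1..T}" for l
    using measurable_count_space_UNIV_comp[OF meas_pair[OF that], of fst] by simp
  have err_int: "integrable M (?err l)" if "l \<in> {1..T}" for l
  proof (rule integrable_const_bound[where B = "(real n)^2"])
    show "?err l \<in> borel_measurable M"
      by (rule measurable_count_space_UNIV_comp[OF meas_pair[OF that],
          of "\<lambda>(A, C). frob2 n C (cmat_S z A)", simplified]) simp
  qed (simp add: frob2_nonneg frob2_chat_S_le)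
  have "expectation (?err l) = expectation err0" if "l \<in> {1..T}" for l
    using integral_comp_eq_if_distr_eq[OF meas_pair[OF that] meas_pair0 ident[OF that],
        of "\<lambda>(A, C). frob2 n C (cmat_S z A)"]
    by (simp add: err0_def[abs_def])
  then have err_sum: "(\<Sum>l\<in>{1..T}. expectation (?err l)) = real T * expectation err0"
    by simp
  have Ch_out: "chat_S mstar (S l \<omega>) (Zh l \<omega>) i j = 0" if "\<not> (i \<in> S l \<omega> \<and> j \<in> S l \<omega>)"
    for l \<omega> i j
    using that by (auto simp: chat_S_def)
  have "(\<Sum>i\<in>{1..n}. \<Sum>j\<in>{1..n}. cmat z i j * prob (few i j)) \<le> (real n)^2 * pi_max n K z * q"
    using z by (rule sum_cmat_mult_le) (auto simp: q_def intro!: Max_ge)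
  then have few_term: "(\<Sum>i\<in>{1..n}. \<Sum>j\<in>{1..n}. cmat z i j * prob (few i j)) / (real n)^2
      \<le> pi_max n K z * q"
    using n by (simp add: divide_le_eq mult.commute)
  have "expectation (\<lambda>\<omega>. delta_tilde n
      (pace T \<tau> (\<lambda>l. S l \<omega>) (\<lambda>l. chat_S mstar (S l \<omega>) (Zh l \<omega>))) (cmat z))
    \<le> (\<Sum>l\<in>{1..T}. expectation (?err l)) / (\<tau> * (real n)^2)
      + (\<Sum>i\<in>{1..n}. \<Sum>j\<in>{1..n}. cmat z i j * prob (few i j)) / (real n)^2"
    unfolding few_def
    by (rule expected_delta_tilde_pace_le[where T = T and S = S, OF tau S_meas Ch_out err_int])
  also have "\<dots> \<le> real T / (\<tau> * (real n)^2) * expectation err0 + pi_max n K z * q"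
    using err_sum few_term by simp
  finally show ?thesis
    unfolding err0_def q_def few_def .
qed

end

theorem mainTheorem2:
  fixes M :: "'a measure"
    and n K mstar T :: nat and \<tau> :: real
    and z :: "nat \<Rightarrow> nat"
    and S :: "nat \<Rightarrow> 'a \<Rightarrow> nat set" and Zh :: "nat \<Rightarrow> 'a \<Rightarrow> nat \<Rightarrow> nat"
    and S0 :: "'a \<Rightarrow> nat set" and Zh0 :: "'a \<Rightarrow> nat \<Rightarrow> nat"
  assumes M: "prob_space M"
    and n: "n \<ge> 1" and mstar: "mstar \<ge> 1" and T: "T \<ge> 1" and tau: "\<tau> > 0"
    and z: "z ` {1..n} \<subseteq> {..<K}"
    and S_sub: "\<And>l \<omega>. l \<in> {1..T} \<Longrightarrow> \<omega> \<in> space M \<Longrightarrow> S l \<omega> \<subseteq> {1..n}"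
    and Zh_lab: "\<And>l \<omega>. l \<in> {1..T} \<Longrightarrow> \<omega> \<in> space M \<Longrightarrow> Zh l \<omega> ` S l \<omega> \<subseteq> {..<K}"
    and S0_sub: "\<And>\<omega>. \<omega> \<in> space M \<Longrightarrow> S0 \<omega> \<subseteq> {1..n}"
    and Zh0_lab: "\<And>\<omega>. \<omega> \<in> space M \<Longrightarrow> Zh0 \<omega> ` S0 \<omega> \<subseteq> {..<K}"
    and meas_pair: "\<And>l. l \<in> {1..T} \<Longrightarrow>
          (\<lambda>\<omega>. (S l \<omega>, chat_S mstar (S l \<omega>) (Zh l \<omega>))) \<in> measurable M (count_space UNIV)"
    and meas_pair0: "(\<lambda>\<omega>. (S0 \<omega>, chat_S mstar (S0 \<omega>) (Zh0 \<omega>))) \<in> measurable M (count_space UNIV)"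
    and meas_Zh0: "\<And>i. (\<lambda>\<omega>. Zh0 \<omega> i) \<in> measurable M (count_space UNIV)"
    and ident: "\<And>l. l \<in> {1..T} \<Longrightarrow>
          distr M (count_space UNIV) (\<lambda>\<omega>. (S l \<omega>, chat_S mstar (S l \<omega>) (Zh l \<omega>)))
        = distr M (count_space UNIV) (\<lambda>\<omega>. (S0 \<omega>, chat_S mstar (S0 \<omega>) (Zh0 \<omega>)))"
  shows "(\<integral>\<omega>. delta_tilde n
              (pace T \<tau> (\<lambda>l. S l \<omega>) (\<lambda>l. chat_S mstar (S l \<omega>) (Zh l \<omega>))) (cmat z) \<partial>M)
         \<le> real T / (\<tau> * (real n)^2) *
             (\<integral>\<omega>. frob2 n (chat_S mstar (S0 \<omega>) (Zh0 \<omega>)) (cmat_S z (S0 \<omega>)) \<partial>M)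
           + pi_max n K z *
             Max ((\<lambda>(i, j). measure M {\<omega> \<in> space M. real (Ncount T (\<lambda>l. S l \<omega>) i j) < \<tau>})
                  ` ({1..n} \<times> {1..n}))
       \<and> (\<integral>\<omega>. frob2 n (chat_S mstar (S0 \<omega>) (Zh0 \<omega>)) (cmat_S z (S0 \<omega>)) \<partial>M)
         \<le> (real n)^2 * measure M {\<omega> \<in> space M. card (S0 \<omega>) < mstar}
           + 4 * (\<integral>\<omega>. (real (card (S0 \<omega>)))^2 * delta_mis K (S0 \<omega>) (Zh0 \<omega>) z
                        * (if card (S0 \<omega>) \<ge> mstar then 1 else 0) \<partial>M)"
  by (rule conjI[OF prob_space.expected_pace_error_le[OF M n tau z meas_pair meas_pair0 ident]
    prob_space.expected_subsample_error_le[OF M z S0_sub Zh0_lab meas_pair0 meas_Zh0]])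

end
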